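(* Let $\Gamma\in[0,1]^{|\mathcal X|\times N}$ be $(\kappa,\delta)$-admissible, let $\epsilon\ge0$, and let $D$ be the uniform distribution on $[0,1/\eta]$ with $\eta=\sqrt{\delta/((1+2\epsilon)T\kappa)}$. Then Generalized FTPL with parameters $(\Gamma,D,\epsilon)$ satisfies \[ \mathrm{Regret}\le O\big(N\sqrt{(1+2\epsilon)T\kappa/\delta}\big)+\epsilon T . \] Since always $\kappa\le 1/\delta$ (entries lie in $[0,1]$), this is at most $O\big((N/\delta)\sqrt{(1+2\epsilon)T}\big)+\epsilon T$.
   Context: Online learning setting: $\mathcal X$ finite set of learner actions, $\mathcal Y$ set of adversary actions, $f:\mathcal X\times\mathcal Y\to[0,1]$; adversary sequence $y_1,\dots,y_T$ fixed in advance; $\mathrm{Regret}=\mathbb{E}[\max_{x}\sum_t f(x,y_t)-\sum_t f(x_t,y_t)]$. Generalized FTPL with parameters $(\Gamma,D,\epsilon)$: draw $\alpha_1,\dots,\alpha_N$ i.i.d. from $D$ once; at each round $t$, play any $x_t$ with $\sum_{\tau<t}f(x_t,y_\tau)+\vec\alpha\cdot\Gamma_{x_t}\ge\sum_{\tau<t}f(x,y_\tau)+\vec\alpha\cdot\Gamma_x-\epsilon$ for all $x\in\mathcal X$, where $\Gamma_x$ is the row of $\Gamma$ indexed by $x$. $\Gamma$ is $(\kappa,\delta)$-admissible if its rows are pairwise distinct, each column has at most $\kappa$ distinct values, and distinct values within a column differ by at least $\delta$. *)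

theory Defs
  imports "HOL-Probability.Probability"
begin

text \<open>The matrix Gamma is represented as G, as a function from learner actions (rows) and column
  indices j < N to reals; row x is the vector (G x j) for j < N.\<close>

definition admissible ::
  "'x set \<Rightarrow> nat \<Rightarrow> ('x \<Rightarrow> nat \<Rightarrow> real) \<Rightarrow> nat \<Rightarrow> real \<Rightarrow> bool" where
  "admissible X N G \<kappa> \<delta> \<longleftrightarrow>
     (\<forall>x\<in>X. \<forall>x'\<in>X. x \<noteq> x' \<longrightarrow> (\<exists>j<N. G x j \<noteq> G x' j)) \<and>
     (\<forall>j<N. card ((\<lambda>x. G x j) ` X) \<le> \<kappa>) \<and>
     (\<forall>j<N. \<forall>x\<in>X. \<forall>x'\<in>X. G x j \<noteq> G x' j \<longrightarrow> \<bar>G x j - G x' j\<bar> \<ge> \<delta>)"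

definition ftpl_choice ::
  "'x set \<Rightarrow> ('x \<Rightarrow> 'y \<Rightarrow> real) \<Rightarrow> (nat \<Rightarrow> 'y) \<Rightarrow> ('x \<Rightarrow> nat \<Rightarrow> real) \<Rightarrow> nat \<Rightarrow> real
     \<Rightarrow> (nat \<Rightarrow> real) \<Rightarrow> nat \<Rightarrow> 'x \<Rightarrow> bool" where
  "ftpl_choice X f y G N \<epsilon> \<alpha> t x \<longleftrightarrow> x \<in> X \<and>
     (\<forall>x'\<in>X. (\<Sum>\<tau><t. f x (y \<tau>)) + (\<Sum>j<N. \<alpha> j * G x j)
              \<ge> (\<Sum>\<tau><t. f x' (y \<tau>)) + (\<Sum>j<N. \<alpha> j * G x' j) - \<epsilon>)"

definition ftpl_noise :: "nat \<Rightarrow> real \<Rightarrow> (nat \<Rightarrow> real) measure" where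
  "ftpl_noise N \<eta> = PiM {..<N} (\<lambda>_. uniform_measure lborel {0..1/\<eta>})"

definition regret ::
  "'x set \<Rightarrow> ('x \<Rightarrow> 'y \<Rightarrow> real) \<Rightarrow> (nat \<Rightarrow> 'y) \<Rightarrow> nat \<Rightarrow> (nat \<Rightarrow> real) measure
     \<Rightarrow> ((nat \<Rightarrow> real) \<Rightarrow> nat \<Rightarrow> 'x) \<Rightarrow> real" where
  "regret X f y T D sel =
     (\<integral>\<alpha>. (Max ((\<lambda>x. \<Sum>t<T. f x (y t)) ` X) - (\<Sum>t<T. f (sel \<alpha> t) (y t))) \<partial>D)"

end

theory Submission
  imports Defs
begin

(*
  Be-the-leader: for a fixed perturbation alpha in [0, L]^N, approximate FTPL loses at most
  epsilon T (the approximation), N L (the size of the perturbation) and the number of switches,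
  i.e. of pairs (t, j) such that the leaders of rounds t and t + 1 differ in column j of Gamma;
  since rows are distinct, every change of leader is visible in some column.

  Fix all coordinates of alpha but alpha_j. Raising alpha_j by more than s = (1 + 2 epsilon) / delta
  can only raise the leader's entry in column j: distinct entries differ by at least delta, while one
  round of losses and the two epsilon-slacks shift the comparison by at most 1 + 2 epsilon. Hence,
  along alpha_j, the column-j entries of two consecutive leaders are monotone up to slack s and take
  at most kappa values, so they disagree on a set of measure at most kappa s. A switch thus has
  probability at most kappa s / L, and L = sqrt (T kappa s) balances the expected T N kappa s / L
  switches against N L.
*)

lemma sum_lessThan_fun_upd_mult:
  fixes \<alpha> g :: "nat \<Rightarrow> 'a::comm_ring"
  assumes "j < N"
  shows "(\<Sum>i<N. (\<alpha>(j := z)) i * g i) = (\<Sum>i<N. \<alpha> i * g i) + (z - \<alpha> j) * g j"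
proof -
  have "(\<Sum>i<N. (\<alpha>(j := z)) i * g i) = z * g j + (\<Sum>i\<in>{..<N} - {j}. \<alpha> i * g i)"
    using assms by (simp add: sum.remove)
  also have "\<dots> = (\<Sum>i<N. \<alpha> i * g i) + (z - \<alpha> j) * g j"
    using assms by (simp add: sum.remove algebra_simps)
  finally show ?thesis .
qed

lemma ftpl_choice_mono_in_coordinate:
  assumes adm: "admissible X N G \<kappa> \<delta>" and f01: "\<forall>x\<in>X. \<forall>b. f x b \<in> {0..1}"
    and lead: "ftpl_choice X f y G N \<epsilon> (\<alpha>(j := z)) r x"
    and lead': "ftpl_choice X f y G N \<epsilon> (\<alpha>(j := z')) r' x'"
    and j: "j < N" and rounds: "r \<le> Suc r'" "r' \<le> Suc r"
    and "\<delta> > 0" "\<epsilon> \<ge> 0" and far: "1 + 2 * \<epsilon> < (z' - z) * \<delta>"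
  shows "G x j \<le> G x' j"
proof (rule ccontr)
  assume "\<not> G x j \<le> G x' j"
  have X: "x \<in> X" "x' \<in> X" using lead lead' by (auto simp: ftpl_choice_def)
  with adm j \<open>\<not> G x j \<le> G x' j\<close> have sep: "\<delta> \<le> G x j - G x' j"
    unfolding admissible_def by force
  define R where "R k w = (\<Sum>\<tau><k. f w (y \<tau>))" for k w
  define \<Phi> where "\<Phi> w = (\<Sum>i<N. \<alpha> i * G w i)" for w
  have "\<bar>(R r x - R r x') - (R r' x - R r' x')\<bar> \<le> 1"
  proof -
    have f: "f x (y k) \<in> {0..1}" "f x' (y k) \<in> {0..1}" for k using f01 X by auto
    have "r = r' \<or> r = Suc r' \<or> r' = Suc r" using rounds by linarith
    then show ?thesis using f[of r] f[of r'] by (elim disjE) (auto simp: R_def abs_le_iff)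
  qed
  moreover have "R r x + \<Phi> x + (z - \<alpha> j) * G x j \<ge> R r x' + \<Phi> x' + (z - \<alpha> j) * G x' j - \<epsilon>"
    using lead X unfolding ftpl_choice_def sum_lessThan_fun_upd_mult[OF j] R_def \<Phi>_def by auto
  moreover have "R r' x' + \<Phi> x' + (z' - \<alpha> j) * G x' j \<ge> R r' x + \<Phi> x + (z' - \<alpha> j) * G x j - \<epsilon>"
    using lead' X unfolding ftpl_choice_def sum_lessThan_fun_upd_mult[OF j] R_def \<Phi>_def by auto
  moreover have "(z' - z) * \<delta> \<le> (z' - z) * (G x j - G x' j)"
  proof (rule mult_left_mono[OF sep])
    have "0 < (z' - z) * \<delta>" using far \<open>\<epsilon> \<ge> 0\<close> by linarith
    then show "0 \<le> z' - z" using \<open>\<delta> > 0\<close> by (simp add: zero_less_mult_iff)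
  qed
  \<comment> \<open>Adding both leader inequalities, the perturbation terms leave (z' - z) (G x j - G x' j) \<le> 1 + 2 \<epsilon>.\<close>
  ultimately show False using far by (simp add: algebra_simps abs_le_iff)
qed

lemma disagreement_set_covered:
  fixes a b :: "real \<Rightarrow> 'v::linorder" and s :: real
  assumes "finite V" "s \<ge> 0" "a ` S \<subseteq> V" "b ` S \<subseteq> V"
    and mono: "\<forall>z\<in>S. \<forall>z'\<in>S. z + s < z' \<longrightarrow> max (a z) (b z) \<le> min (a z') (b z')"
  shows "\<exists>U \<in> sets lborel. {z\<in>S. a z \<noteq> b z} \<subseteq> U \<and> emeasure lborel U \<le> ennreal (card V * s)"
proof -
  define level where "level v = {z\<in>S. a z \<noteq> b z \<and> min (a z) (b z) = v}" for v
  define U where "U = (\<Union>v\<in>V. {Inf (level v) .. Inf (level v) + s})"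
  \<comment> \<open>Two disagreement points more than s apart cannot share the value min (a z) (b z).\<close>
  have level_near: "z - s \<le> z'" if "z \<in> level v" "z' \<in> level v" for z z' v
  proof (rule ccontr)
    assume "\<not> z - s \<le> z'"
    with that mono have "max (a z') (b z') \<le> min (a z) (b z)" by (auto simp: level_def)
    with that show False by (auto simp: level_def min_def max_def split: if_splits)
  qed
  have "{z\<in>S. a z \<noteq> b z} \<subseteq> U"
  proof
    fix z assume z: "z \<in> {z\<in>S. a z \<noteq> b z}"
    define v where "v = min (a z) (b z)"
    have "z \<in> level v" using z by (simp add: level_def v_def)
    moreover have "v \<in> V" using z assms(3,4) by (auto simp: v_def min_def)
    moreover have "bdd_below (level v)"
      by (rule bdd_belowI[of _ "z - s"]) (rule level_near[OF \<open>z \<in> level v\<close>])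
    moreover have "Inf (level v) \<le> z"
      using \<open>z \<in> level v\<close> \<open>bdd_below (level v)\<close> by (rule cInf_lower)
    moreover have "z - s \<le> Inf (level v)"
      using \<open>z \<in> level v\<close> level_near by (intro cInf_greatest) auto
    ultimately show "z \<in> U" unfolding U_def by auto
  qed
  moreover have "U \<in> sets lborel" using \<open>finite V\<close> by (auto simp: U_def)
  moreover have "emeasure lborel U \<le> ennreal (card V * s)"
  proof -
    have "emeasure lborel U \<le> (\<Sum>v\<in>V. emeasure lborel {Inf (level v) .. Inf (level v) + s})"
      unfolding U_def using \<open>finite V\<close> by (intro emeasure_subadditive_finite) auto
    also have "\<dots> = ennreal (card V * s)"
      using \<open>s \<ge> 0\<close> by (simp add: ennreal_mult ennreal_of_nat_eq_real_of_nat)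
    finally show ?thesis .
  qed
  ultimately show ?thesis by blast
qed

lemma nn_integral_uniform_disagreement_le:
  fixes a b :: "real \<Rightarrow> 'v::linorder" and L s :: real
  assumes "L > 0" "finite V" "s \<ge> 0" "a ` {0..L} \<subseteq> V" "b ` {0..L} \<subseteq> V"
    and "\<forall>z\<in>{0..L}. \<forall>z'\<in>{0..L}. z + s < z' \<longrightarrow> max (a z) (b z) \<le> min (a z') (b z')"
  shows "(\<integral>\<^sup>+ z. indicator {z. a z \<noteq> b z} z \<partial>uniform_measure lborel {0..L})
           \<le> ennreal (card V * s / L)"
proof -
  obtain U where U: "U \<in> sets lborel" "{z\<in>{0..L}. a z \<noteq> b z} \<subseteq> U"
    "emeasure lborel U \<le> ennreal (card V * s)"
    using disagreement_set_covered[OF assms(2-)] by blast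
  have "(\<integral>\<^sup>+ z. indicator {z. a z \<noteq> b z} z \<partial>uniform_measure lborel {0..L})
      \<le> (\<integral>\<^sup>+ z. indicator U z \<partial>uniform_measure lborel {0..L})"
    by (intro nn_integral_mono_AE AE_uniform_measureI AE_I2) (use U(2) in \<open>auto split: split_indicator\<close>)
  also have "\<dots> = emeasure lborel ({0..L} \<inter> U) / ennreal L"
    using U(1) \<open>L > 0\<close> by simp
  also have "\<dots> \<le> ennreal (card V * s) / ennreal L"
  proof (rule divide_right_mono_ennreal)
    have "emeasure lborel ({0..L} \<inter> U) \<le> emeasure lborel U" using U(1) by (intro emeasure_mono) auto
    then show "emeasure lborel ({0..L} \<inter> U) \<le> ennreal (card V * s)" using U(3) by (rule order_trans)
  qed
  also have "\<dots> = ennreal (card V * s / L)"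
    using \<open>L > 0\<close> \<open>s \<ge> 0\<close> by (simp add: divide_ennreal)
  finally show ?thesis .
qed

lemma ftpl_coordinate_switch_prob_le:
  fixes x x' :: "real \<Rightarrow> 'x"
  assumes "L > 0" and adm: "admissible X N G \<kappa> \<delta>" and f01: "\<forall>x\<in>X. \<forall>b. f x b \<in> {0..1}"
    and "finite X" "\<epsilon> \<ge> 0" "\<delta> > 0" and j: "j < N"
    and lead: "\<forall>z\<in>{0..L}. ftpl_choice X f y G N \<epsilon> (\<alpha>(j := z)) t (x z)
                       \<and> ftpl_choice X f y G N \<epsilon> (\<alpha>(j := z)) (Suc t) (x' z)"
  shows "(\<integral>\<^sup>+ z. indicator {z. G (x z) j \<noteq> G (x' z) j} z \<partial>uniform_measure lborel {0..L})
           \<le> ennreal (\<kappa> * ((1 + 2 * \<epsilon>) / \<delta>) / L)"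
proof -
  define s where "s = (1 + 2 * \<epsilon>) / \<delta>"
  define V where "V = (\<lambda>w. G w j) ` X"
  have V: "finite V" "card V \<le> \<kappa>"
    using \<open>finite X\<close> adm j by (auto simp: V_def admissible_def)
  have "(\<lambda>z. G (x z) j) ` {0..L} \<subseteq> V" "(\<lambda>z. G (x' z) j) ` {0..L} \<subseteq> V"
    using lead by (auto simp: V_def ftpl_choice_def)
  moreover have "max (G (x z) j) (G (x' z) j) \<le> min (G (x w) j) (G (x' w) j)"
    if "z \<in> {0..L}" "w \<in> {0..L}" "z + s < w" for z w
  proof -
    have "(1 + 2 * \<epsilon>) / \<delta> < w - z" using that by (simp add: s_def)
    then have "1 + 2 * \<epsilon> < (w - z) * \<delta>" using \<open>\<delta> > 0\<close> by (simp add: pos_divide_less_eq)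
    note mono = ftpl_choice_mono_in_coordinate[OF adm f01 _ _ j _ _ \<open>\<delta> > 0\<close> \<open>\<epsilon> \<ge> 0\<close> this]
    show ?thesis
      using lead that by (auto intro!: mono)
  qed
  ultimately have "(\<integral>\<^sup>+ z. indicator {z. G (x z) j \<noteq> G (x' z) j} z \<partial>uniform_measure lborel {0..L})
      \<le> ennreal (card V * s / L)"
    using \<open>L > 0\<close> \<open>finite V\<close> \<open>\<epsilon> \<ge> 0\<close> \<open>\<delta> > 0\<close>
    by (intro nn_integral_uniform_disagreement_le) (auto simp: s_def)
  also have "\<dots> \<le> ennreal (\<kappa> * s / L)"
    using V \<open>L > 0\<close> \<open>\<epsilon> \<ge> 0\<close> \<open>\<delta> > 0\<close>
    by (intro ennreal_leI divide_right_mono mult_right_mono) (auto simp: s_def)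
  finally show ?thesis by (simp add: s_def)
qed

definition leader_switch ::
  "'m measure \<Rightarrow> ('x \<Rightarrow> nat \<Rightarrow> real) \<Rightarrow> ('m \<Rightarrow> nat \<Rightarrow> 'x) \<Rightarrow> nat \<Rightarrow> nat \<Rightarrow> 'm set" where
  "leader_switch M G sel t j = {\<alpha> \<in> space M. G (sel \<alpha> t) j \<noteq> G (sel \<alpha> (Suc t)) j}"

lemma leader_switch_sets:
  assumes "(\<lambda>\<alpha>. sel \<alpha> t) \<in> measurable M (count_space UNIV)"
    and "(\<lambda>\<alpha>. sel \<alpha> (Suc t)) \<in> measurable M (count_space UNIV)"
  shows "leader_switch M G sel t j \<in> sets M"
proof -
  have "(\<lambda>\<alpha>. G (sel \<alpha> t) j) \<in> borel_measurable M" "(\<lambda>\<alpha>. G (sel \<alpha> (Suc t)) j) \<in> borel_measurable M"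
    using assms by (auto elim: measurable_compose)
  then have "space M - {\<alpha> \<in> space M. G (sel \<alpha> t) j = G (sel \<alpha> (Suc t)) j} \<in> sets M"
    by (intro sets.compl_sets measurable_equality_set) auto
  also have "space M - {\<alpha> \<in> space M. G (sel \<alpha> t) j = G (sel \<alpha> (Suc t)) j} = leader_switch M G sel t j"
    by (auto simp: leader_switch_def)
  finally show ?thesis .
qed

lemma ftpl_switch_prob_le:
  fixes sel :: "(nat \<Rightarrow> real) \<Rightarrow> nat \<Rightarrow> 'x" and L :: real and N :: nat
  defines "D \<equiv> PiM {..<N} (\<lambda>_. uniform_measure lborel {0..L})"
  assumes "L > 0" and adm: "admissible X N G \<kappa> \<delta>" and f01: "\<forall>x\<in>X. \<forall>b. f x b \<in> {0..1}"
    and "finite X" "\<epsilon> \<ge> 0" "\<delta> > 0" and j: "j < N"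
    and lead: "\<forall>r\<in>{t, Suc t}. \<forall>\<alpha>. (\<forall>i<N. \<alpha> i \<in> {0..L}) \<longrightarrow> ftpl_choice X f y G N \<epsilon> \<alpha> r (sel \<alpha> r)"
    and meas: "\<forall>r\<in>{t, Suc t}. (\<lambda>\<alpha>. sel \<alpha> r) \<in> measurable D (count_space UNIV)"
  shows "emeasure D (leader_switch D G sel t j) \<le> ennreal (\<kappa> * ((1 + 2 * \<epsilon>) / \<delta>) / L)"
proof -
  define M where "M = (\<lambda>_::nat. uniform_measure lborel {0..L})"
  define I where "I = {..<N} - {j}"
  define F where "F = leader_switch D G sel t j"
  have M: "prob_space (M i)" for i
    unfolding M_def using \<open>L > 0\<close> by (intro prob_space_uniform_measure) auto
  interpret product_sigma_finite M
    using M by (auto simp: product_sigma_finite_def intro: prob_space_imp_sigma_finite)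
  interpret I: prob_space "PiM I M" by (rule prob_space_PiM[OF M])
  have D: "D = PiM (insert j I) M" using j by (auto simp: D_def M_def I_def insert_absorb)
  have "F \<in> sets D" unfolding F_def using meas by (intro leader_switch_sets) auto
  have "emeasure D F = (\<integral>\<^sup>+ \<alpha>. (\<integral>\<^sup>+ z. indicator F (\<alpha>(j := z)) \<partial>M j) \<partial>PiM I M)"
    using \<open>F \<in> sets D\<close> unfolding D by (subst product_nn_integral_insert[symmetric]) (auto simp: I_def)
  also have "\<dots> \<le> (\<integral>\<^sup>+ \<alpha>. ennreal (\<kappa> * ((1 + 2 * \<epsilon>) / \<delta>) / L) \<partial>PiM I M)"
  proof (rule nn_integral_mono_AE)
    have "AE \<alpha> in PiM I M. \<forall>i\<in>I. \<alpha> i \<in> {0..L}"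
      unfolding M_def by (intro eventually_ball_finite ballI AE_PiM_component[OF M[unfolded M_def]]
        AE_uniform_measureI) (auto simp: I_def intro: AE_I2)
    then show "AE \<alpha> in PiM I M. (\<integral>\<^sup>+ z. indicator F (\<alpha>(j := z)) \<partial>M j)
                 \<le> ennreal (\<kappa> * ((1 + 2 * \<epsilon>) / \<delta>) / L)"
    proof eventually_elim
      case (elim \<alpha>)
      have "(\<integral>\<^sup>+ z. indicator F (\<alpha>(j := z)) \<partial>M j)
          \<le> (\<integral>\<^sup>+ z. indicator {z. G (sel (\<alpha>(j := z)) t) j \<noteq> G (sel (\<alpha>(j := z)) (Suc t)) j} z \<partial>M j)"
        by (intro nn_integral_mono) (auto simp: F_def leader_switch_def split: split_indicator)
      also have "\<dots> \<le> ennreal (\<kappa> * ((1 + 2 * \<epsilon>) / \<delta>) / L)"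
        unfolding M_def
        by (rule ftpl_coordinate_switch_prob_le[OF \<open>L > 0\<close> adm f01 \<open>finite X\<close> \<open>\<epsilon> \<ge> 0\<close> \<open>\<delta> > 0\<close> j,
              where x = "\<lambda>z. sel (\<alpha>(j := z)) t" and x' = "\<lambda>z. sel (\<alpha>(j := z)) (Suc t)"
              and \<alpha> = \<alpha> and t = t and y = y])
           (use lead elim in \<open>auto simp: I_def\<close>)
      finally show ?case .
    qed
  qed
  also have "\<dots> = ennreal (\<kappa> * ((1 + 2 * \<epsilon>) / \<delta>) / L)"
    by (simp add: I.emeasure_space_1)
  finally show ?thesis unfolding F_def .
qed

lemma loss_change_le_row_changes:
  fixes f :: "'x \<Rightarrow> 'y \<Rightarrow> real" and G :: "'x \<Rightarrow> nat \<Rightarrow> real"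
  assumes rows: "\<forall>x\<in>X. \<forall>x'\<in>X. x \<noteq> x' \<longrightarrow> (\<exists>j<N. G x j \<noteq> G x' j)"
    and f01: "\<forall>x\<in>X. \<forall>b. f x b \<in> {0..1}" and "x \<in> X" "x' \<in> X"
  shows "f x' b - f x b \<le> (\<Sum>j<N. of_bool (G x j \<noteq> G x' j))"
proof (cases "x = x'")
  case False
  then obtain j where "j < N" "G x j \<noteq> G x' j" using rows \<open>x \<in> X\<close> \<open>x' \<in> X\<close> by blast
  then have "of_bool (G x j \<noteq> G x' j) \<le> (\<Sum>j<N. of_bool (G x j \<noteq> G x' j) :: real)"
    by (intro member_le_sum) auto
  with \<open>G x j \<noteq> G x' j\<close> have "1 \<le> (\<Sum>j<N. of_bool (G x j \<noteq> G x' j) :: real)" by simp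
  moreover have "f x' b \<le> 1" "0 \<le> f x b" using f01 \<open>x \<in> X\<close> \<open>x' \<in> X\<close> by auto
  ultimately show ?thesis by linarith
qed (simp add: sum_nonneg)

lemma ftpl_be_the_leader:
  assumes lead: "\<forall>t\<le>m. ftpl_choice X f y G N \<epsilon> \<alpha> t (x t)" and "z \<in> X"
  shows "(\<Sum>t<m. f z (y t)) + (\<Sum>j<N. \<alpha> j * G z j) - \<epsilon> * (m + 1)
           \<le> (\<Sum>t<m. f (x (Suc t)) (y t)) + (\<Sum>j<N. \<alpha> j * G (x 0) j)"
  using assms
proof (induction m arbitrary: z)
  case 0
  then have "ftpl_choice X f y G N \<epsilon> \<alpha> 0 (x 0)" by simp
  with \<open>z \<in> X\<close> show ?case unfolding ftpl_choice_def by simp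
next
  case (Suc m)
  have choice: "ftpl_choice X f y G N \<epsilon> \<alpha> (Suc m) (x (Suc m))" using Suc.prems(1) by blast
  then have "x (Suc m) \<in> X" unfolding ftpl_choice_def by blast
  moreover have "\<forall>t\<le>m. ftpl_choice X f y G N \<epsilon> \<alpha> t (x t)" using Suc.prems(1) by simp
  ultimately have "(\<Sum>t<m. f (x (Suc m)) (y t)) + (\<Sum>j<N. \<alpha> j * G (x (Suc m)) j) - \<epsilon> * (m + 1)
      \<le> (\<Sum>t<m. f (x (Suc t)) (y t)) + (\<Sum>j<N. \<alpha> j * G (x 0) j)"
    using Suc.IH by blast
  moreover have "(\<Sum>t<Suc m. f z (y t)) + (\<Sum>j<N. \<alpha> j * G z j) - \<epsilon>
      \<le> (\<Sum>t<Suc m. f (x (Suc m)) (y t)) + (\<Sum>j<N. \<alpha> j * G (x (Suc m)) j)"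
    using choice \<open>z \<in> X\<close> unfolding ftpl_choice_def by blast
  ultimately show ?case by (simp add: algebra_simps)
qed

lemma ftpl_regret_pointwise_le:
  fixes L :: real
  assumes "finite X" "X \<noteq> {}" and f01: "\<forall>x\<in>X. \<forall>b. f x b \<in> {0..1}"
    and G01: "\<forall>x\<in>X. \<forall>j<N. G x j \<in> {0..1}"
    and rows: "\<forall>x\<in>X. \<forall>x'\<in>X. x \<noteq> x' \<longrightarrow> (\<exists>j<N. G x j \<noteq> G x' j)"
    and lead: "\<forall>t\<le>m. ftpl_choice X f y G N \<epsilon> \<alpha> t (x t)"
    and box: "\<forall>j<N. \<alpha> j \<in> {0..L}"
  shows "Max ((\<lambda>z. \<Sum>t<Suc m. f z (y t)) ` X) - (\<Sum>t<Suc m. f (x t) (y t))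
     \<le> \<epsilon> * real (Suc m) + of_bool (\<exists>x\<in>X. \<exists>x'\<in>X. x \<noteq> x') + N * L
        + (\<Sum>t<m. \<Sum>j<N. of_bool (G (x t) j \<noteq> G (x (Suc t)) j))"
proof -
  define \<Phi> where "\<Phi> w = (\<Sum>j<N. \<alpha> j * G w j)" for w
  have x: "x t \<in> X" if "t \<le> m" for t using lead that by (simp add: ftpl_choice_def)
  have "\<Phi> (x 0) \<le> (\<Sum>j<N. L)"
    unfolding \<Phi>_def using box G01 x[of 0] by (intro sum_mono) (auto intro: mult_le_one order_trans[OF mult_right_le_one_le])
  have switches: "(\<Sum>t<m. f (x (Suc t)) (y t)) - (\<Sum>t<m. f (x t) (y t))
      \<le> (\<Sum>t<m. \<Sum>j<N. of_bool (G (x t) j \<noteq> G (x (Suc t)) j))"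
    unfolding sum_subtractf[symmetric] using x
    by (intro sum_mono loss_change_le_row_changes[OF rows f01]) auto
  have "(\<Sum>t<Suc m. f z (y t)) - (\<Sum>t<Suc m. f (x t) (y t))
     \<le> \<epsilon> * real (Suc m) + of_bool (\<exists>x\<in>X. \<exists>x'\<in>X. x \<noteq> x') + N * L
        + (\<Sum>t<m. \<Sum>j<N. of_bool (G (x t) j \<noteq> G (x (Suc t)) j))" if "z \<in> X" for z
  proof -
    \<comment> \<open>The last round has no next leader to compare with; it costs at most 1 unless X is a singleton.\<close>
    have "f z (y m) - f (x m) (y m) \<le> of_bool (\<exists>z\<in>X. \<exists>z'\<in>X. z \<noteq> z')"
    proof (cases "z = x m")
      case False
      then have "of_bool (\<exists>z\<in>X. \<exists>z'\<in>X. z \<noteq> z') = (1::real)" using \<open>z \<in> X\<close> x[of m] by auto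
      moreover have "f z (y m) \<le> 1" "0 \<le> f (x m) (y m)" using f01 \<open>z \<in> X\<close> x[of m] by auto
      ultimately show ?thesis by linarith
    qed simp
    moreover have "0 \<le> \<Phi> z" unfolding \<Phi>_def using box G01 \<open>z \<in> X\<close> by (intro sum_nonneg) auto
    ultimately show ?thesis
      using ftpl_be_the_leader[OF lead \<open>z \<in> X\<close>] switches \<open>\<Phi> (x 0) \<le> (\<Sum>j<N. L)\<close>
      by (simp add: \<Phi>_def)
  qed
  then show ?thesis using \<open>finite X\<close> \<open>X \<noteq> {}\<close> by (simp add: Max_le_iff algebra_simps)
qed

lemma ftpl_expected_switches_le:
  fixes sel :: "(nat \<Rightarrow> real) \<Rightarrow> nat \<Rightarrow> 'x" and L :: real and N :: nat
  defines "D \<equiv> PiM {..<N} (\<lambda>_. uniform_measure lborel {0..L})"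
  assumes "L > 0" and adm: "admissible X N G \<kappa> \<delta>" and f01: "\<forall>x\<in>X. \<forall>b. f x b \<in> {0..1}"
    and "finite X" "\<epsilon> \<ge> 0" "\<delta> > 0"
    and lead: "\<forall>t\<le>m. \<forall>\<alpha>. (\<forall>j<N. \<alpha> j \<in> {0..L}) \<longrightarrow> ftpl_choice X f y G N \<epsilon> \<alpha> t (sel \<alpha> t)"
    and meas: "\<forall>t\<le>m. (\<lambda>\<alpha>. sel \<alpha> t) \<in> measurable D (count_space UNIV)"
  shows "integrable D (\<lambda>\<alpha>. \<Sum>t<m. \<Sum>j<N. indicator (leader_switch D G sel t j) \<alpha> :: real)"
    and "(\<integral>\<alpha>. (\<Sum>t<m. \<Sum>j<N. indicator (leader_switch D G sel t j) \<alpha>) \<partial>D)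
           \<le> m * N * (\<kappa> * ((1 + 2 * \<epsilon>) / \<delta>) / L)"
proof -
  have M: "prob_space (uniform_measure lborel {0..L})"
    using \<open>L > 0\<close> by (intro prob_space_uniform_measure) auto
  interpret D: prob_space D unfolding D_def by (rule prob_space_PiM[OF M])
  define p where "p = \<kappa> * ((1 + 2 * \<epsilon>) / \<delta>) / L"
  define F where "F = leader_switch D G sel"
  have F_int: "integrable D (indicator (F t j) :: _ \<Rightarrow> real)" if "t < m" for t j
    using that meas unfolding F_def
    by (intro integrable_real_indicator leader_switch_sets) (auto simp: D.emeasure_eq_measure)
  show "integrable D (\<lambda>\<alpha>. \<Sum>t<m. \<Sum>j<N. indicator (leader_switch D G sel t j) \<alpha> :: real)"
    unfolding F_def[symmetric] by (auto intro!: integrable_sum F_int)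
  have "(\<integral>\<alpha>. (\<Sum>t<m. \<Sum>j<N. indicator (F t j) \<alpha> :: real) \<partial>D)
      = (\<Sum>t<m. \<integral>\<alpha>. (\<Sum>j<N. indicator (F t j) \<alpha>) \<partial>D)"
    by (rule Bochner_Integration.integral_sum) (auto intro!: integrable_sum F_int)
  also have "\<dots> = (\<Sum>t<m. \<Sum>j<N. \<integral>\<alpha>. indicator (F t j) \<alpha> \<partial>D)"
    by (intro sum.cong refl Bochner_Integration.integral_sum F_int) auto
  also have "\<dots> = (\<Sum>t<m. \<Sum>j<N. measure D (F t j))"
    by (simp add: F_def leader_switch_def Int_absorb2 del: Collect_conj_eq)
  also have "\<dots> \<le> (\<Sum>t<m. \<Sum>j<N. p)"
  proof (intro sum_mono)
    fix t j assume "t \<in> {..<m}" "j \<in> {..<N}"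
    then have "emeasure D (F t j) \<le> ennreal p"
      unfolding F_def p_def D_def using lead meas
      by (intro ftpl_switch_prob_le[where y = y, OF \<open>L > 0\<close> adm f01 \<open>finite X\<close> \<open>\<epsilon> \<ge> 0\<close> \<open>\<delta> > 0\<close>])
         (auto simp: D_def)
    moreover have "p \<ge> 0" using \<open>L > 0\<close> \<open>\<epsilon> \<ge> 0\<close> \<open>\<delta> > 0\<close> by (simp add: p_def)
    ultimately show "measure D (F t j) \<le> p" by (simp add: D.emeasure_eq_measure)
  qed
  finally show "(\<integral>\<alpha>. (\<Sum>t<m. \<Sum>j<N. indicator (leader_switch D G sel t j) \<alpha>) \<partial>D) \<le> m * N * p"
    by (simp add: F_def)
qed

lemma ftpl_expected_regret_le:
  fixes sel :: "(nat \<Rightarrow> real) \<Rightarrow> nat \<Rightarrow> 'x" and L :: real and N :: nat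
  defines "D \<equiv> PiM {..<N} (\<lambda>_. uniform_measure lborel {0..L})"
  assumes "L > 0" "finite X" "X \<noteq> {}" and f01: "\<forall>x\<in>X. \<forall>b. f x b \<in> {0..1}"
    and G01: "\<forall>x\<in>X. \<forall>j<N. G x j \<in> {0..1}" and adm: "admissible X N G \<kappa> \<delta>"
    and "\<epsilon> \<ge> 0" "\<delta> > 0" "T > 0"
    and lead: "\<forall>t<T. \<forall>\<alpha>. (\<forall>j<N. \<alpha> j \<in> {0..L}) \<longrightarrow> ftpl_choice X f y G N \<epsilon> \<alpha> t (sel \<alpha> t)"
    and meas: "\<forall>t<T. (\<lambda>\<alpha>. sel \<alpha> t) \<in> measurable D (count_space UNIV)"
  shows "regret X f y T D sel \<le> \<epsilon> * T + of_bool (\<exists>x\<in>X. \<exists>x'\<in>X. x \<noteq> x') + N * L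
           + T * N * (\<kappa> * ((1 + 2 * \<epsilon>) / \<delta>) / L)"
proof -
  obtain m where T: "T = Suc m" using \<open>T > 0\<close> gr0_implies_Suc by blast
  have M: "prob_space (uniform_measure lborel {0..L})"
    using \<open>L > 0\<close> by (intro prob_space_uniform_measure) auto
  interpret D: prob_space D unfolding D_def by (rule prob_space_PiM[OF M])
  define B where "B = \<epsilon> * T + of_bool (\<exists>x\<in>X. \<exists>x'\<in>X. x \<noteq> x') + N * L"
  define S where "S = (\<lambda>\<alpha>. \<Sum>t<m. \<Sum>j<N. indicator (leader_switch D G sel t j) \<alpha> :: real)"
  have lead': "\<forall>t\<le>m. \<forall>\<alpha>. (\<forall>j<N. \<alpha> j \<in> {0..L}) \<longrightarrow> ftpl_choice X f y G N \<epsilon> \<alpha> t (sel \<alpha> t)"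
    using lead T by simp
  have "integrable D S" "integral\<^sup>L D S \<le> m * N * (\<kappa> * ((1 + 2 * \<epsilon>) / \<delta>) / L)"
    using ftpl_expected_switches_le[OF \<open>L > 0\<close> adm f01 \<open>finite X\<close> \<open>\<epsilon> \<ge> 0\<close> \<open>\<delta> > 0\<close> lead'] meas T
    by (simp_all add: S_def D_def)
  have rows: "\<forall>x\<in>X. \<forall>x'\<in>X. x \<noteq> x' \<longrightarrow> (\<exists>j<N. G x j \<noteq> G x' j)"
    using adm by (simp add: admissible_def)
  have "AE \<alpha> in D. \<forall>j\<in>{..<N}. \<alpha> j \<in> {0..L}"
    unfolding D_def
    by (intro eventually_ball_finite ballI AE_PiM_component[OF M] AE_uniform_measureI) (auto intro: AE_I2)
  then have "AE \<alpha> in D. Max ((\<lambda>x. \<Sum>t<T. f x (y t)) ` X) - (\<Sum>t<T. f (sel \<alpha> t) (y t)) \<le> B + S \<alpha>"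
    using AE_space
  proof eventually_elim
    case (elim \<alpha>)
    then have box: "\<forall>j<N. \<alpha> j \<in> {0..L}" by simp
    then have "\<forall>t\<le>m. ftpl_choice X f y G N \<epsilon> \<alpha> t (sel \<alpha> t)" using lead' by simp
    from ftpl_regret_pointwise_le[OF assms(3,4) f01 G01 rows this box]
    have "Max ((\<lambda>x. \<Sum>t<T. f x (y t)) ` X) - (\<Sum>t<T. f (sel \<alpha> t) (y t))
        \<le> B + (\<Sum>t<m. \<Sum>j<N. of_bool (G (sel \<alpha> t) j \<noteq> G (sel \<alpha> (Suc t)) j))"
      unfolding T B_def .
    also have "(\<Sum>t<m. \<Sum>j<N. of_bool (G (sel \<alpha> t) j \<noteq> G (sel \<alpha> (Suc t)) j)) = S \<alpha>"
      using elim by (simp add: S_def leader_switch_def indicator_def)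
    finally show ?case .
  qed
  moreover have "0 \<le> B + S \<alpha>" for \<alpha>
    unfolding B_def S_def using \<open>\<epsilon> \<ge> 0\<close> \<open>L > 0\<close> by (intro add_nonneg_nonneg sum_nonneg) auto
  ultimately have "regret X f y T D sel \<le> integral\<^sup>L D (\<lambda>\<alpha>. B + S \<alpha>)"
    unfolding regret_def using \<open>integrable D S\<close>
    by (intro integral_mono_AE' Bochner_Integration.integrable_add D.integrable_const) auto
  also have "\<dots> = B + integral\<^sup>L D S" using \<open>integrable D S\<close> by (simp add: D.prob_space)
  also have "\<dots> \<le> B + T * N * (\<kappa> * ((1 + 2 * \<epsilon>) / \<delta>) / L)"
  proof -
    have "m * N * (\<kappa> * ((1 + 2 * \<epsilon>) / \<delta>) / L) \<le> T * N * (\<kappa> * ((1 + 2 * \<epsilon>) / \<delta>) / L)"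
      using T \<open>L > 0\<close> \<open>\<epsilon> \<ge> 0\<close> \<open>\<delta> > 0\<close> by (intro mult_right_mono) auto
    then show ?thesis using \<open>integral\<^sup>L D S \<le> _\<close> by simp
  qed
  finally show ?thesis by (simp add: B_def)
qed

lemma admissible_nontrivial:
  fixes G :: "'x \<Rightarrow> nat \<Rightarrow> real"
  assumes adm: "admissible X N G \<kappa> \<delta>" and G01: "\<forall>x\<in>X. \<forall>j<N. G x j \<in> {0..1}"
    and "x \<in> X" "x' \<in> X" "x \<noteq> x'"
  shows "N \<ge> 1" "\<delta> \<le> 1"
proof -
  obtain j where j: "j < N" "G x j \<noteq> G x' j"
    using adm assms(3-) unfolding admissible_def by meson
  then show "N \<ge> 1" by simp
  have "\<delta> \<le> \<bar>G x j - G x' j\<bar>" using adm assms(3,4) j unfolding admissible_def by simp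
  moreover have "G x j \<in> {0..1}" "G x' j \<in> {0..1}" using G01 assms(3,4) j by auto
  ultimately show "\<delta> \<le> 1" by auto
qed

lemma ftpl_tuned_regret_le:
  fixes sel :: "(nat \<Rightarrow> real) \<Rightarrow> nat \<Rightarrow> 'x" and N \<kappa> T :: nat and L \<epsilon> \<delta> :: real
  defines "L \<equiv> sqrt ((1 + 2 * \<epsilon>) * T * \<kappa> / \<delta>)"
  assumes "finite X" "X \<noteq> {}" "\<forall>x\<in>X. \<forall>b. f x b \<in> {0..1}" and G01: "\<forall>x\<in>X. \<forall>j<N. G x j \<in> {0..1}"
    and "\<kappa> \<ge> 1" "\<delta> > 0" and adm: "admissible X N G \<kappa> \<delta>" and "\<epsilon> \<ge> 0" "T \<ge> 1"
    and "\<forall>t<T. \<forall>\<alpha>. (\<forall>j<N. \<alpha> j \<in> {0..L}) \<longrightarrow> ftpl_choice X f y G N \<epsilon> \<alpha> t (sel \<alpha> t)"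
    and "\<forall>t<T. (\<lambda>\<alpha>. sel \<alpha> t) \<in> measurable (PiM {..<N} (\<lambda>_. uniform_measure lborel {0..L})) (count_space UNIV)"
  shows "regret X f y T (PiM {..<N} (\<lambda>_. uniform_measure lborel {0..L})) sel \<le> 3 * real N * L + \<epsilon> * real T"
proof -
  have "1 * 1 * 1 \<le> (1 + 2 * \<epsilon>) * T * \<kappa>" using assms by (intro mult_mono) auto
  then have "L > 0" using \<open>\<delta> > 0\<close> by (simp add: L_def)
  have balance: "T * N * (\<kappa> * ((1 + 2 * \<epsilon>) / \<delta>) / L) = N * L"
  proof -
    have "T * N * (\<kappa> * ((1 + 2 * \<epsilon>) / \<delta>) / L) = N * (L\<^sup>2 / L)"
      using \<open>1 * 1 * 1 \<le> _\<close> \<open>\<delta> > 0\<close> by (simp add: L_def)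
    then show ?thesis using \<open>L > 0\<close> by (simp add: power2_eq_square)
  qed
  have "of_bool (\<exists>x\<in>X. \<exists>x'\<in>X. x \<noteq> x') \<le> N * L"
  proof (cases "\<exists>x\<in>X. \<exists>x'\<in>X. x \<noteq> x'")
    case True
    then have "N \<ge> 1" "\<delta> \<le> 1" using admissible_nontrivial[OF adm G01] by blast+
    with \<open>1 * 1 * 1 \<le> _\<close> \<open>\<delta> > 0\<close> have "1 \<le> L" by (simp add: L_def le_divide_eq)
    then have "1 * 1 \<le> N * L" using \<open>N \<ge> 1\<close> by (intro mult_mono) auto
    with True show ?thesis by simp
  qed (use \<open>L > 0\<close> in simp)
  moreover have "regret X f y T (PiM {..<N} (\<lambda>_. uniform_measure lborel {0..L})) sel
      \<le> \<epsilon> * T + of_bool (\<exists>x\<in>X. \<exists>x'\<in>X. x \<noteq> x') + N * L + T * N * (\<kappa> * ((1 + 2 * \<epsilon>) / \<delta>) / L)"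
    using assms(2-) \<open>L > 0\<close> by (intro ftpl_expected_regret_le) auto
  ultimately show ?thesis unfolding balance by linarith
qed

theorem theorem2p3:
  "\<exists>C::real. \<forall>(X::'x set) (f::'x \<Rightarrow> 'y \<Rightarrow> real) (y::nat \<Rightarrow> 'y)
      (G::'x \<Rightarrow> nat \<Rightarrow> real) (N::nat) (\<kappa>::nat) (\<delta>::real) (\<epsilon>::real) (T::nat)
      (sel::(nat \<Rightarrow> real) \<Rightarrow> nat \<Rightarrow> 'x).
     let \<eta> = sqrt (\<delta> / ((1 + 2 * \<epsilon>) * real T * real \<kappa>)) in
     (finite X \<and> X \<noteq> {} \<and>
      (\<forall>x\<in>X. \<forall>b. f x b \<in> {0..1}) \<and>
      (\<forall>x\<in>X. \<forall>j<N. G x j \<in> {0..1}) \<and>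
      \<kappa> \<ge> 1 \<and> \<delta> > 0 \<and> admissible X N G \<kappa> \<delta> \<and>
      \<epsilon> \<ge> 0 \<and> T \<ge> 1 \<and>
      (\<forall>t<T. \<forall>\<alpha>. (\<forall>j<N. \<alpha> j \<in> {0..1/\<eta>}) \<longrightarrow>
          ftpl_choice X f y G N \<epsilon> \<alpha> t (sel \<alpha> t)) \<and>
      (\<forall>t<T. (\<lambda>\<alpha>. sel \<alpha> t) \<in> measurable (ftpl_noise N \<eta>) (count_space UNIV)))
     \<longrightarrow> regret X f y T (ftpl_noise N \<eta>) sel
           \<le> C * real N * sqrt ((1 + 2 * \<epsilon>) * real T * real \<kappa> / \<delta>) + \<epsilon> * real T"
proof (rule exI[of _ 3], intro allI, unfold Let_def, intro impI, elim conjE)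
  fix X :: "'x set" and f :: "'x \<Rightarrow> 'y \<Rightarrow> real" and y :: "nat \<Rightarrow> 'y"
    and G :: "'x \<Rightarrow> nat \<Rightarrow> real" and N \<kappa> T :: nat and \<delta> \<epsilon> :: real
    and sel :: "(nat \<Rightarrow> real) \<Rightarrow> nat \<Rightarrow> 'x"
  have L: "1 / sqrt (\<delta> / ((1 + 2 * \<epsilon>) * T * \<kappa>)) = sqrt ((1 + 2 * \<epsilon>) * T * \<kappa> / \<delta>)"
    by (simp add: real_sqrt_divide)
  assume "finite X" "X \<noteq> {}" "\<forall>x\<in>X. \<forall>b. f x b \<in> {0..1}" "\<forall>x\<in>X. \<forall>j<N. G x j \<in> {0..1}"
    "\<kappa> \<ge> 1" "\<delta> > 0" "admissible X N G \<kappa> \<delta>" "\<epsilon> \<ge> 0" "T \<ge> 1"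
    "\<forall>t<T. \<forall>\<alpha>. (\<forall>j<N. \<alpha> j \<in> {0..1 / sqrt (\<delta> / ((1 + 2 * \<epsilon>) * T * \<kappa>))}) \<longrightarrow>
       ftpl_choice X f y G N \<epsilon> \<alpha> t (sel \<alpha> t)"
    "\<forall>t<T. (\<lambda>\<alpha>. sel \<alpha> t) \<in> measurable (ftpl_noise N (sqrt (\<delta> / ((1 + 2 * \<epsilon>) * T * \<kappa>))))
       (count_space UNIV)"
  then show "regret X f y T (ftpl_noise N (sqrt (\<delta> / ((1 + 2 * \<epsilon>) * T * \<kappa>)))) sel
      \<le> 3 * real N * sqrt ((1 + 2 * \<epsilon>) * T * \<kappa> / \<delta>) + \<epsilon> * T"
    unfolding ftpl_noise_def L by (rule ftpl_tuned_regret_le)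
qed

end
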